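(* Let $\mathbb{A}$ be a non-empty set. A word $x\in\mathbb{A}^\omega$ is ultimately periodic if and only if for every finite coloring $\varphi:\mathbb{A}^+\to C$ there exists a suffix of $x$ which admits a shift invariant $\varphi$-monochromatic factorization.
   Context: $x$ is ultimately periodic if $x=uv^\omega$ for some finite words $u$ and non-empty $v$. $T$ is the shift, $T(x_0x_1\cdots)=x_1x_2\cdots$. A factorization $z=V_0V_1V_2\cdots$ with all $V_i\in\mathbb{A}^+$ is $\varphi$-monochromatic if there is $c\in C$ with $\varphi(V_i)=c$ for all $i$. It is shift invariant if for every positive integer $j$, the induced factorization $T^j(z)=W_0W_1W_2\cdots$ with $|W_i|=|V_i|$ for all $i$ is also $\varphi$-monochromatic (the color may depend on $j$). *)

theory Defs
  imports "HOL-Library.Omega_Words_Fun"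
begin

text \<open>A factorization z = V0 V1 V2 ... into non-empty
  finite words is encoded by its length sequence l (all l i > 0); the i-th
  factor is z[cut l i -> cut l (i+1)] where cut l i is the sum of the first i lengths.\<close>

definition ultimately_periodic :: "'a word \<Rightarrow> bool" where
  "ultimately_periodic x \<longleftrightarrow> (\<exists>u v. v \<noteq> [] \<and> x = u \<frown> v\<^sup>\<omega>)"

definition cut :: "(nat \<Rightarrow> nat) \<Rightarrow> nat \<Rightarrow> nat" where
  "cut l i = (\<Sum>k<i. l k)"

definition factor :: "'a word \<Rightarrow> (nat \<Rightarrow> nat) \<Rightarrow> nat \<Rightarrow> 'a list" where
  "factor z l i = z [cut l i \<rightarrow> cut l (Suc i)]"

definition is_factorization :: "(nat \<Rightarrow> nat) \<Rightarrow> bool" where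
  "is_factorization l \<longleftrightarrow> (\<forall>i. 0 < l i)"

definition monochromatic :: "('a list \<Rightarrow> 'c) \<Rightarrow> 'a word \<Rightarrow> (nat \<Rightarrow> nat) \<Rightarrow> bool" where
  "monochromatic \<phi> z l \<longleftrightarrow> (\<exists>c. \<forall>i. \<phi> (factor z l i) = c)"

definition shift_invariant :: "('a list \<Rightarrow> 'c) \<Rightarrow> 'a word \<Rightarrow> (nat \<Rightarrow> nat) \<Rightarrow> bool" where
  "shift_invariant \<phi> z l \<longleftrightarrow> (\<forall>j>0. monochromatic \<phi> (suffix j z) l)"

definition finite_coloring :: "('a list \<Rightarrow> 'c) \<Rightarrow> bool" where
  "finite_coloring \<phi> \<longleftrightarrow> finite (\<phi> ` {w. w \<noteq> []})"

end

theory Submission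
  imports Defs "HOL-Library.Countable_Set"
begin

text \<open>An ultimately periodic word with period \<open>p\<close> from position \<open>k\<close> on is cut, after
  position \<open>k\<close>, into blocks of length \<open>p\<close>; every shift of this factorization consists of
  equal blocks, so it is monochromatic for any coloring.
  Conversely, color a finite word by a color of its first letter. A shift invariant
  monochromatic factorization \<open>V\<^sub>0 V\<^sub>1 \<dots>\<close> of a suffix then says that the letter colors at
  distance \<open>|V\<^sub>0|\<close> agree from some point on, i.e. the colored word is ultimately periodic.
  It remains to color the letters with finitely many colors so that a word that is not
  ultimately periodic stays so: injectively if it uses finitely many letters, and otherwise
  by the indicator of a suitable set of letters, which exists because there are uncountably
  many sets of letters but only countably many ultimately periodic binary words.\<close>

definition eventually_periodic :: "'b word \<Rightarrow> bool" where
  "eventually_periodic y \<longleftrightarrow> (\<exists>k p. 0 < p \<and> (\<forall>n\<ge>k. y (n + p) = y n))"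

lemma periodic_add_mult:
  fixes q :: nat
  assumes "\<forall>n\<ge>k. y (n + p) = y n" and "k \<le> n"
  shows "y (n + q * p) = y n"
proof (induction q)
  case (Suc q)
  have "y (n + Suc q * p) = y ((n + q * p) + p)" by (simp add: algebra_simps)
  also have "\<dots> = y (n + q * p)" using assms by simp
  finally show ?case using Suc by simp
qed simp

lemma ultimately_periodic_iff_eventually_periodic:
  "ultimately_periodic y \<longleftrightarrow> eventually_periodic y"
proof
  assume "ultimately_periodic y"
  then obtain u v where v: "v \<noteq> []" and y: "y = u \<frown> v\<^sup>\<omega>"
    unfolding ultimately_periodic_def by blast
  have "y (n + length v) = y n" if "length u \<le> n" for n
  proof -
    have "n + length v - length u = (n - length u) + length v" using that by simp
    then have "(n + length v - length u) mod length v = (n - length u) mod length v" by simp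
    then show ?thesis using v that by (simp add: y)
  qed
  then show "eventually_periodic y" unfolding eventually_periodic_def using v by blast
next
  assume "eventually_periodic y"
  then obtain k p where p: "0 < p" and per: "\<forall>n\<ge>k. y (n + p) = y n"
    unfolding eventually_periodic_def by blast
  define u where "u = y [0 \<rightarrow> k]"
  define v where "v = y [k \<rightarrow> k + p]"
  have v: "length v = p" "v \<noteq> []" and u: "length u = k" using p by (auto simp: u_def v_def)
  have "y n = (u \<frown> v\<^sup>\<omega>) n" for n
  proof (cases "n < k")
    case False
    have n: "n = (k + (n - k) mod p) + ((n - k) div p) * p"
      using False mod_div_mult_eq[of "n - k" p] by linarith
    have "y n = y (k + (n - k) mod p)"
      by (subst n, rule periodic_add_mult[OF per]) simp
    also have "\<dots> = v ! ((n - k) mod p)" using p by (simp add: v_def subsequence_def)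
    also have "\<dots> = (u \<frown> v\<^sup>\<omega>) n" using False u v p by simp
    finally show ?thesis .
  qed (simp add: u_def)
  then show "ultimately_periodic y" unfolding ultimately_periodic_def using v by blast
qed

lemma eventually_periodic_comp_inj_on:
  assumes "inj_on f (range y)" and "eventually_periodic (f \<circ> y)"
  shows "eventually_periodic y"
proof -
  obtain k p where "0 < p" and per: "\<forall>n\<ge>k. f (y (n + p)) = f (y n)"
    using assms(2) unfolding eventually_periodic_def by auto
  have "\<forall>n\<ge>k. y (n + p) = y n"
    using per inj_onD[OF assms(1)] by blast
  with \<open>0 < p\<close> show ?thesis unfolding eventually_periodic_def by blast
qed

lemma countable_ultimately_periodic:
  "countable {y :: 'b::countable word. ultimately_periodic y}"
proof (rule countable_subset)
  show "{y :: 'b word. ultimately_periodic y} \<subseteq> (\<lambda>(u, v). u \<frown> v\<^sup>\<omega>) ` UNIV"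
    unfolding ultimately_periodic_def by auto
qed simp

lemma uncountable_nat_sets: "uncountable (UNIV :: nat set set)"
proof
  assume "countable (UNIV :: nat set set)"
  then obtain f :: "nat \<Rightarrow> nat set" where "range f = Pow UNIV"
    using uncountable_def[of "UNIV :: nat set set"] by auto
  then show False using Cantors_theorem[of "UNIV :: nat set"] by auto
qed

lemma infinite_range_not_eventually_periodic_indicator:
  assumes "infinite (range x)"
  obtains M where "\<not> eventually_periodic (\<lambda>n. x n \<in> M)"
proof -
  obtain h :: "nat \<Rightarrow> 'a" where h: "inj h" "range h \<subseteq> range x"
    using assms unfolding infinite_iff_countable_subset by blast
  define indicator_word where "indicator_word T = (\<lambda>n. x n \<in> h ` T)" for T
  have "inj indicator_word"
  proof (rule injI, rule set_eqI)
    fix S T m assume eq: "indicator_word S = indicator_word T"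
    obtain n where "x n = h m" using h(2) by (metis range_subsetD rangeE)
    then have "(h m \<in> h ` S) = (h m \<in> h ` T)"
      using fun_cong[OF eq, of n] by (simp add: indicator_word_def)
    then show "m \<in> S \<longleftrightarrow> m \<in> T" using h(1) by (simp add: inj_image_mem_iff)
  qed
  then have "uncountable (range indicator_word)"
    using uncountable_nat_sets countable_image_inj_on by blast
  then have "\<not> range indicator_word \<subseteq> {y. ultimately_periodic y}"
    using countable_subset countable_ultimately_periodic by blast
  then show thesis
    using that by (auto simp: indicator_word_def ultimately_periodic_iff_eventually_periodic)
qed

lemma finite_letter_coloring_not_eventually_periodic:
  assumes "\<not> eventually_periodic x"
  obtains f :: "'a \<Rightarrow> nat" where "finite (range f)" and "\<not> eventually_periodic (f \<circ> x)"
proof (cases "finite (range x)")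
  case True
  then obtain g :: "'a \<Rightarrow> nat" where g: "inj_on g (range x)"
    using finite_imp_inj_to_nat_seg by blast
  define f where "f a = (if a \<in> range x then g a else 0)" for a
  have "range f \<subseteq> insert 0 (g ` range x)" by (auto simp: f_def)
  then have "finite (range f)" by (rule finite_subset) (use True in simp)
  moreover have "inj_on f (range x)" using g by (simp add: f_def inj_on_def)
  then have "\<not> eventually_periodic (f \<circ> x)"
    using assms eventually_periodic_comp_inj_on by blast
  ultimately show thesis by (rule that)
next
  case False
  then obtain M where M: "\<not> eventually_periodic (\<lambda>n. x n \<in> M)"
    by (rule infinite_range_not_eventually_periodic_indicator)
  define f :: "'a \<Rightarrow> nat" where "f a = of_bool (a \<in> M)" for a
  have "range f \<subseteq> {0, 1}" by (auto simp: f_def)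
  then have "finite (range f)" by (rule finite_subset) simp
  moreover have "inj_on (of_bool :: bool \<Rightarrow> nat) (range (\<lambda>n. x n \<in> M))"
    by (rule inj_onI) (simp add: of_bool_def split: if_splits)
  then have "\<not> eventually_periodic ((of_bool :: bool \<Rightarrow> nat) \<circ> (\<lambda>n. x n \<in> M))"
    using M eventually_periodic_comp_inj_on by blast
  then have "\<not> eventually_periodic (f \<circ> x)" by (simp add: f_def comp_def)
  ultimately show thesis by (rule that)
qed

lemma factor_constant_length_periodic:
  assumes "\<forall>n\<ge>k. x (n + p) = x n"
  shows "factor (suffix (k + j) x) (\<lambda>_. p) i = x [k + j \<rightarrow> k + j + p]"
proof -
  have "factor (suffix (k + j) x) (\<lambda>_. p) i = x [k + j + i * p \<rightarrow> k + j + i * p + p]"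
    by (simp add: factor_def cut_def algebra_simps)
  also have "\<dots> = x [k + j \<rightarrow> k + j + p]"
    unfolding subsequence_def
  proof (rule nth_equalityI)
    fix t assume "t < length (map x [k + j + i * p..<k + j + i * p + p])"
    moreover have "x ((k + j + t) + i * p) = x (k + j + t)"
      by (rule periodic_add_mult[OF assms]) simp
    ultimately show "map x [k + j + i * p..<k + j + i * p + p] ! t = map x [k + j..<k + j + p] ! t"
      by (simp add: algebra_simps)
  qed simp
  finally show ?thesis .
qed

lemma shift_invariant_monochromatic_constant_length:
  assumes "\<forall>n\<ge>k. x (n + p) = x n"
  shows "monochromatic \<phi> (suffix k x) (\<lambda>_. p) \<and> shift_invariant \<phi> (suffix k x) (\<lambda>_. p)"
  using factor_constant_length_periodic[OF assms, of 0] factor_constant_length_periodic[OF assms]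
  unfolding monochromatic_def shift_invariant_def by simp

lemma hd_factor:
  assumes "is_factorization l"
  shows "hd (factor z l i) = z (cut l i)"
proof -
  have "cut l i < cut l (Suc i)" using assms by (simp add: is_factorization_def cut_def)
  then show ?thesis by (simp add: factor_def subsequence_def upt_conv_Cons)
qed

lemma shift_invariant_first_letter_period:
  assumes l: "is_factorization l"
    and mono: "monochromatic (f \<circ> hd) (suffix k x) l"
    and inv: "shift_invariant (f \<circ> hd) (suffix k x) l"
    and "k \<le> n"
  shows "f (x (n + l 0)) = f (x n)"
proof -
  have "monochromatic (f \<circ> hd) (suffix n x) l"
    using mono inv \<open>k \<le> n\<close> le_Suc_ex[OF \<open>k \<le> n\<close>]
    by (cases "n = k") (auto simp: shift_invariant_def)
  then have "f (hd (factor (suffix n x) l 1)) = f (hd (factor (suffix n x) l 0))"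
    unfolding monochromatic_def by (metis comp_apply)
  moreover have "hd (factor (suffix n x) l 1) = x (n + l 0)"
    by (simp add: hd_factor[OF l] cut_def)
  moreover have "hd (factor (suffix n x) l 0) = x n"
    by (simp add: hd_factor[OF l] cut_def)
  ultimately show ?thesis by simp
qed

theorem proposition3p3:
  fixes x :: "'a word"
  shows "ultimately_periodic x \<longleftrightarrow>
    (\<forall>\<phi> :: 'a list \<Rightarrow> nat. finite_coloring \<phi> \<longrightarrow>
       (\<exists>k l. is_factorization l \<and> monochromatic \<phi> (suffix k x) l
              \<and> shift_invariant \<phi> (suffix k x) l))"
proof (intro iffI allI impI)
  fix \<phi> :: "'a list \<Rightarrow> nat"
  assume "ultimately_periodic x"
  then obtain k p where "0 < p" and per: "\<forall>n\<ge>k. x (n + p) = x n"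
    unfolding ultimately_periodic_iff_eventually_periodic eventually_periodic_def by blast
  then have "is_factorization (\<lambda>_. p)" by (simp add: is_factorization_def)
  with shift_invariant_monochromatic_constant_length[OF per]
  show "\<exists>k l. is_factorization l \<and> monochromatic \<phi> (suffix k x) l
              \<and> shift_invariant \<phi> (suffix k x) l" by blast
next
  assume factorizations: "\<forall>\<phi> :: 'a list \<Rightarrow> nat. finite_coloring \<phi> \<longrightarrow>
       (\<exists>k l. is_factorization l \<and> monochromatic \<phi> (suffix k x) l
              \<and> shift_invariant \<phi> (suffix k x) l)"
  show "ultimately_periodic x"
  proof (rule ccontr)
    assume "\<not> ultimately_periodic x"
    then obtain f :: "'a \<Rightarrow> nat" where f: "finite (range f)" "\<not> eventually_periodic (f \<circ> x)"
      using finite_letter_coloring_not_eventually_periodic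
      by (metis ultimately_periodic_iff_eventually_periodic)
    have "finite_coloring (f \<circ> hd)"
      unfolding finite_coloring_def by (rule finite_subset[OF _ f(1)]) auto
    then obtain k l where l: "is_factorization l"
      and "monochromatic (f \<circ> hd) (suffix k x) l" "shift_invariant (f \<circ> hd) (suffix k x) l"
      using factorizations by blast
    then have "\<forall>n\<ge>k. (f \<circ> x) (n + l 0) = (f \<circ> x) n"
      using shift_invariant_first_letter_period by auto
    moreover have "0 < l 0" using l by (simp add: is_factorization_def)
    ultimately have "eventually_periodic (f \<circ> x)" unfolding eventually_periodic_def by blast
    with f(2) show False ..
  qed
qed

end
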